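(* Let $(\mathcal V,\otimes,\lambda)$ be a Monoidal category (all $\lambda^\phi$ invertible). A homotopy coalgebra $(C,\chi)$ in $\mathcal V$ is isomorphic (as a homotopy coalgebra) to the homotopy coalgebra associated with an ordinary coalgebra if and only if all morphisms $\chi^I_{\mathbf1,\dots,\mathbf1}:C(1)^{\otimes I}\to C(I)$, $I\in\mathbb N$, are invertible.
   Context: $\mathcal O_{sk}$ is the category with objects $\mathbf n=\{1<\dots<n\}$, $n\ge0$ (identified with $n\in\mathbb N$), and non-decreasing maps; $\sqcup$ is ordered disjoint union; composition is diagrammatic. Structure morphisms of $\mathcal V$: $\lambda^\phi:\otimes^{j\in J}\otimes^{i\in\phi^{-1}j}X_i\to\otimes^{i\in I}X_i$ for $\phi:I\to J$ in $\mathcal O_{sk}$. A homotopy coalgebra $(C,\chi)$ is a lax Monoidal functor $(\mathcal O_{sk}^{op},\sqcup,\mathrm{id})\to(\mathcal V,\otimes,\lambda)$: a functor $C:\mathcal O_{sk}^{op}\to\mathcal V$ together with morphisms $\chi^I_{N_1,\dots,N_I}:\otimes^{i\in I}C(N_i)\to C(\sqcup_iN_i)$ natural in the $N_i$, with $\chi^{\mathbf1}_N=\mathrm{id}$ and $(\otimes^{j\in J}\chi^{\phi^{-1}j})\chi^J=\lambda^\phi\chi^I$ for all $\phi:I\to J$. A morphism $t:(C,\chi)\to(G,\gamma)$ is a family $t(k):C(k)\to G(k)$ natural with respect to $\mathcal O_{sk}^{op}$ and with $\chi^I t(\sum n_i)=(\otimes^{i\in I}t(n_i))\gamma^I$. An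 ordinary coalgebra is $C$ with $\Delta_I:C\to C^{\otimes I}$, $\Delta_{\mathbf1}=\mathrm{id}$, $\Delta_I=\Delta_J(\otimes_j\Delta_{\phi^{-1}j})\lambda^\phi$; its associated homotopy coalgebra has $C(J)=C^{\otimes J}$, $C(\phi^{op})=(\otimes_j\Delta_{\phi^{-1}j})\lambda^\phi$, $\chi^I_{n_1,\dots,n_I}=\lambda^{\sqcup_i\mathbf n_i\to I}$. *)

theory Defs
  imports Main
begin

text \<open>Objects of O_sk are natural numbers n (standing for {1<...<n}; we index
elements by 0..n-1).  A morphism m -> n (non-decreasing map) is represented
canonically as the list of its values: a sorted list of length m with entries < n.\<close>

definition osk_hom :: "nat \<Rightarrow> nat \<Rightarrow> nat list \<Rightarrow> bool" where
  "osk_hom m n \<phi> \<longleftrightarrow> length \<phi> = m \<and> sorted \<phi> \<and> (\<forall>x\<in>set \<phi>. x < n)"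

definition osk_id :: "nat \<Rightarrow> nat list" where
  "osk_id n = [0..<n]"

text \<open>diagrammatic composition: phi : I -> J, psi : J -> K gives phi psi : I -> K\<close>
definition osk_comp :: "nat list \<Rightarrow> nat list \<Rightarrow> nat list" where
  "osk_comp \<phi> \<psi> = map (\<lambda>j. \<psi> ! j) \<phi>"

text \<open>the sub-family of X indexed by the fibre phi^{-1} j (in the order of I)\<close>
definition fib :: "nat list \<Rightarrow> 'a list \<Rightarrow> nat \<Rightarrow> 'a list" where
  "fib \<phi> X j = map fst (filter (\<lambda>p. snd p = j) (zip X \<phi>))"

definition fsize :: "nat list \<Rightarrow> nat \<Rightarrow> nat" where
  "fsize \<phi> j = length (filter (\<lambda>x. x = j) \<phi>)"

text \<open>restriction of phi : I -> J over psi^{-1} k, as a map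
  (phi psi)^{-1} k -> psi^{-1} k, both re-indexed from 0 (J has size nJ)\<close>
definition osk_restr :: "nat \<Rightarrow> nat list \<Rightarrow> nat list \<Rightarrow> nat \<Rightarrow> nat list" where
  "osk_restr nJ \<phi> \<psi> k =
     map (\<lambda>j. j - length (filter (\<lambda>j'. \<psi> ! j' < k) [0..<nJ])) (fib (osk_comp \<phi> \<psi>) \<phi> k)"

text \<open>ordinal sum of maps f_i : M_i -> N_i, giving sum M_i -> sum N_i\<close>
definition osk_sum :: "nat list \<Rightarrow> nat list list \<Rightarrow> nat list" where
  "osk_sum Ns fs = concat (map (\<lambda>i. map (\<lambda>x. x + sum_list (take i Ns)) (fs ! i)) [0..<length Ns])"

text \<open>the canonical map  n_1 \<sqcup> ... \<sqcup> n_I -> I\<close>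
definition osk_collapse :: "nat list \<Rightarrow> nat list" where
  "osk_collapse Ns = concat (map (\<lambda>i. replicate (Ns ! i) i) [0..<length Ns])"

text \<open>A category with all objects of type 'o and all morphisms of type 'm;
composition mcmp is diagrammatic (mcmp f g = f ; g, defined when mcod f = mdom g).
tns xs = tensor product of the family xs (indexed by length xs), tnsm on morphisms.
mlam J phi X is lambda^phi : tensor_{j<J} tensor_{i in phi^{-1} j} X_i -> tensor_i X_i.\<close>

record ('o, 'm) mcat =
  mdom :: "'m \<Rightarrow> 'o"
  mcod :: "'m \<Rightarrow> 'o"
  midm :: "'o \<Rightarrow> 'm"
  mcmp :: "'m \<Rightarrow> 'm \<Rightarrow> 'm"
  tns :: "'o list \<Rightarrow> 'o"
  tnsm :: "'m list \<Rightarrow> 'm"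
  mlam :: "nat \<Rightarrow> nat list \<Rightarrow> 'o list \<Rightarrow> 'm"

definition is_category :: "('o, 'm, 'z) mcat_scheme \<Rightarrow> bool" where
  "is_category V \<longleftrightarrow>
     (\<forall>a. mdom V (midm V a) = a \<and> mcod V (midm V a) = a) \<and>
     (\<forall>f g. mcod V f = mdom V g \<longrightarrow>
        mdom V (mcmp V f g) = mdom V f \<and> mcod V (mcmp V f g) = mcod V g) \<and>
     (\<forall>f. mcmp V (midm V (mdom V f)) f = f \<and> mcmp V f (midm V (mcod V f)) = f) \<and>
     (\<forall>f g h. mcod V f = mdom V g \<and> mcod V g = mdom V h \<longrightarrow>
        mcmp V (mcmp V f g) h = mcmp V f (mcmp V g h))"

definition invertible :: "('o, 'm, 'z) mcat_scheme \<Rightarrow> 'm \<Rightarrow> bool" where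
  "invertible V f \<longleftrightarrow> (\<exists>g. mdom V g = mcod V f \<and> mcod V g = mdom V f \<and>
      mcmp V f g = midm V (mdom V f) \<and> mcmp V g f = midm V (mcod V f))"

definition tensor_functors :: "('o, 'm, 'z) mcat_scheme \<Rightarrow> bool" where
  "tensor_functors V \<longleftrightarrow>
     (\<forall>fs. mdom V (tnsm V fs) = tns V (map (mdom V) fs) \<and>
           mcod V (tnsm V fs) = tns V (map (mcod V) fs)) \<and>
     (\<forall>xs. tnsm V (map (midm V) xs) = midm V (tns V xs)) \<and>
     (\<forall>fs gs. length fs = length gs \<and> (\<forall>i<length fs. mcod V (fs ! i) = mdom V (gs ! i)) \<longrightarrow>
        tnsm V (map2 (mcmp V) fs gs) = mcmp V (tnsm V fs) (tnsm V gs)) \<and>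
     (\<forall>x. tns V [x] = x) \<and> (\<forall>f. tnsm V [f] = f)"

definition nested_tns :: "('o, 'm, 'z) mcat_scheme \<Rightarrow> nat \<Rightarrow> nat list \<Rightarrow> 'o list \<Rightarrow> 'o" where
  "nested_tns V J \<phi> X = tns V (map (\<lambda>j. tns V (fib \<phi> X j)) [0..<J])"

definition lax_monoidal_cat :: "('o, 'm, 'z) mcat_scheme \<Rightarrow> bool" where
  "lax_monoidal_cat V \<longleftrightarrow> is_category V \<and> tensor_functors V \<and>
     \<comment> \<open>typing of lambda\<close>
     (\<forall>J \<phi> X. osk_hom (length X) J \<phi> \<longrightarrow>
        mdom V (mlam V J \<phi> X) = nested_tns V J \<phi> X \<and> mcod V (mlam V J \<phi> X) = tns V X) \<and>
     \<comment> \<open>naturality of lambda\<close>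
     (\<forall>J \<phi> fs. osk_hom (length fs) J \<phi> \<longrightarrow>
        mcmp V (tnsm V (map (\<lambda>j. tnsm V (fib \<phi> fs j)) [0..<J])) (mlam V J \<phi> (map (mcod V) fs))
        = mcmp V (mlam V J \<phi> (map (mdom V) fs)) (tnsm V fs)) \<and>
     \<comment> \<open>lambda^{id} = id\<close>
     (\<forall>X. mlam V (length X) (osk_id (length X)) X = midm V (tns V X)) \<and>
     \<comment> \<open>lambda^{I -> 1} = id\<close>
     (\<forall>X. mlam V 1 (replicate (length X) 0) X = midm V (tns V X)) \<and>
     \<comment> \<open>coherence for phi : I -> J, psi : J -> K\<close>
     (\<forall>J K \<phi> \<psi> X. osk_hom (length X) J \<phi> \<and> osk_hom J K \<psi> \<longrightarrow>
        mcmp V (mlam V K \<psi> (map (\<lambda>j. tns V (fib \<phi> X j)) [0..<J])) (mlam V J \<phi> X)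
        = mcmp V (tnsm V (map (\<lambda>k. mlam V (fsize \<psi> k) (osk_restr J \<phi> \<psi> k)
                                           (fib (osk_comp \<phi> \<psi>) X k)) [0..<K]))
                 (mlam V K (osk_comp \<phi> \<psi>) X))"

definition monoidal_cat :: "('o, 'm, 'z) mcat_scheme \<Rightarrow> bool" where
  "monoidal_cat V \<longleftrightarrow> lax_monoidal_cat V \<and>
     (\<forall>J \<phi> X. osk_hom (length X) J \<phi> \<longrightarrow> invertible V (mlam V J \<phi> X))"

text \<open>hob n = C(n); hmor n phi = C(phi^op) : C(n) -> C(m) for phi : m -> n;
  hchi Ns = chi^I_{N_1,...,N_I} with I = length Ns.\<close>
record ('o, 'm) hcoalg =
  hob :: "nat \<Rightarrow> 'o"
  hmor :: "nat \<Rightarrow> nat list \<Rightarrow> 'm"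
  hchi :: "nat list \<Rightarrow> 'm"

definition is_hcoalg :: "('o, 'm, 'z) mcat_scheme \<Rightarrow> ('o, 'm) hcoalg \<Rightarrow> bool" where
  "is_hcoalg V C \<longleftrightarrow>
     \<comment> \<open>C is a functor O_sk^op -> V\<close>
     (\<forall>m n \<phi>. osk_hom m n \<phi> \<longrightarrow> mdom V (hmor C n \<phi>) = hob C n \<and> mcod V (hmor C n \<phi>) = hob C m) \<and>
     (\<forall>n. hmor C n (osk_id n) = midm V (hob C n)) \<and>
     (\<forall>l m n \<phi> \<psi>. osk_hom l m \<phi> \<and> osk_hom m n \<psi> \<longrightarrow>
        hmor C n (osk_comp \<phi> \<psi>) = mcmp V (hmor C n \<psi>) (hmor C m \<phi>)) \<and>
     \<comment> \<open>typing of chi\<close>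
     (\<forall>Ns. mdom V (hchi C Ns) = tns V (map (hob C) Ns) \<and> mcod V (hchi C Ns) = hob C (sum_list Ns)) \<and>
     \<comment> \<open>chi^1 = id\<close>
     (\<forall>n. hchi C [n] = midm V (hob C n)) \<and>
     \<comment> \<open>naturality of chi in the N_i (f_i : M_i -> N_i, M_i = length (fs ! i))\<close>
     (\<forall>Ns fs. length fs = length Ns \<and> (\<forall>i<length Ns. osk_hom (length (fs ! i)) (Ns ! i) (fs ! i)) \<longrightarrow>
        mcmp V (tnsm V (map (\<lambda>i. hmor C (Ns ! i) (fs ! i)) [0..<length Ns])) (hchi C (map length fs))
        = mcmp V (hchi C Ns) (hmor C (sum_list Ns) (osk_sum Ns fs))) \<and>
     \<comment> \<open>coherence for phi : I -> J\<close>
     (\<forall>J \<phi> Ns. osk_hom (length Ns) J \<phi> \<longrightarrow>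
        mcmp V (tnsm V (map (\<lambda>j. hchi C (fib \<phi> Ns j)) [0..<J]))
               (hchi C (map (\<lambda>j. sum_list (fib \<phi> Ns j)) [0..<J]))
        = mcmp V (mlam V J \<phi> (map (hob C) Ns)) (hchi C Ns))"

definition is_hmorph :: "('o, 'm, 'z) mcat_scheme \<Rightarrow> ('o, 'm) hcoalg \<Rightarrow> ('o, 'm) hcoalg
    \<Rightarrow> (nat \<Rightarrow> 'm) \<Rightarrow> bool" where
  "is_hmorph V C G t \<longleftrightarrow>
     (\<forall>k. mdom V (t k) = hob C k \<and> mcod V (t k) = hob G k) \<and>
     (\<forall>m n \<phi>. osk_hom m n \<phi> \<longrightarrow> mcmp V (hmor C n \<phi>) (t m) = mcmp V (t n) (hmor G n \<phi>)) \<and>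
     (\<forall>Ns. mcmp V (hchi C Ns) (t (sum_list Ns)) = mcmp V (tnsm V (map t Ns)) (hchi G Ns))"

definition hcoalg_iso :: "('o, 'm, 'z) mcat_scheme \<Rightarrow> ('o, 'm) hcoalg \<Rightarrow> ('o, 'm) hcoalg \<Rightarrow> bool" where
  "hcoalg_iso V C G \<longleftrightarrow> (\<exists>t s. is_hmorph V C G t \<and> is_hmorph V G C s \<and>
      (\<forall>k. mcmp V (t k) (s k) = midm V (hob C k) \<and> mcmp V (s k) (t k) = midm V (hob G k)))"

definition is_coalg :: "('o, 'm, 'z) mcat_scheme \<Rightarrow> 'o \<Rightarrow> (nat \<Rightarrow> 'm) \<Rightarrow> bool" where
  "is_coalg V D \<Delta> \<longleftrightarrow>
     (\<forall>I. mdom V (\<Delta> I) = D \<and> mcod V (\<Delta> I) = tns V (replicate I D)) \<and>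
     \<Delta> 1 = midm V D \<and>
     (\<forall>I J \<phi>. osk_hom I J \<phi> \<longrightarrow>
        \<Delta> I = mcmp V (\<Delta> J) (mcmp V (tnsm V (map (\<lambda>j. \<Delta> (fsize \<phi> j)) [0..<J]))
                                        (mlam V J \<phi> (replicate I D))))"

definition assoc_hcoalg :: "('o, 'm, 'z) mcat_scheme \<Rightarrow> 'o \<Rightarrow> (nat \<Rightarrow> 'm) \<Rightarrow> ('o, 'm) hcoalg" where
  "assoc_hcoalg V D \<Delta> =
     \<lparr> hob = (\<lambda>J. tns V (replicate J D)),
       hmor = (\<lambda>J \<phi>. mcmp V (tnsm V (map (\<lambda>j. \<Delta> (fsize \<phi> j)) [0..<J]))
                             (mlam V J \<phi> (replicate (length \<phi>) D))),
       hchi = (\<lambda>Ns. mlam V (length Ns) (osk_collapse Ns) (replicate (sum_list Ns) D)) \<rparr>"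

end

theory Submission
  imports Defs "HOL-Library.Multiset"
begin

text \<open>Let \<open>X I = \<chi>^I_{1,...,1} : C(1)^{\<otimes>I} \<rightarrow> C(I)\<close>. In the homotopy coalgebra associated
  with an ordinary coalgebra this map is \<open>\<lambda>^{id} = id\<close>, and an isomorphism \<open>t\<close> of homotopy
  coalgebras gives \<open>X I = (\<otimes> t 1) ; (t I)\<inverse>\<close> (composition is diagrammatic), so every \<open>X I\<close>
  is invertible.

  Conversely, if every \<open>X I\<close> is invertible, the inverses \<open>Y I\<close> transport the structure of \<open>C\<close>
  onto the objects \<open>C(1)^{\<otimes>I}\<close>. Naturality of \<open>\<chi>\<close> for the maps \<open>\<phi>\<inverse>(j) \<rightarrow> 1\<close>, whose ordinal sum
  is \<open>\<phi> : I \<rightarrow> J\<close>, together with coherence of \<open>\<chi>\<close> for \<open>\<phi>\<close> gives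
  \<open>C(\<phi>) ; Y I = Y J ; (\<otimes>\<^sub>j \<Delta> |\<phi>\<inverse>(j)|) ; \<lambda>^\<phi>\<close> with \<open>\<Delta> n = C(n \<rightarrow> 1) ; Y n\<close>.
  Composing with \<open>C(J \<rightarrow> 1)\<close> this is the coassociativity of \<open>\<Delta>\<close>; as it stands it says that \<open>Y\<close>
  is an isomorphism from \<open>C\<close> onto the homotopy coalgebra associated with \<open>(C(1), \<Delta>)\<close>.\<close>

lemma fib_replicate: "length \<phi> = I \<Longrightarrow> fib \<phi> (replicate I x) j = replicate (fsize \<phi> j) x"
  unfolding fib_def fsize_def
  by (induction \<phi> arbitrary: I) (auto simp: Suc_length_conv)

lemma fsize_eq_count: "fsize xs j = count (mset xs) j"
  by (induction xs) (simp_all add: fsize_def)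

lemma sorted_concat_replicate: "sorted (concat (map (\<lambda>i. replicate (f i) i) [0..<n]))"
  by (induction n) (auto simp: sorted_append)

lemma fsize_concat_replicate:
  "fsize (concat (map (\<lambda>i. replicate (f i) (i::nat)) [0..<n])) j = (if j < n then f j else 0)"
  by (induction n) (auto simp: fsize_def filter_replicate less_Suc_eq)

lemma concat_replicate_fsize:
  assumes "osk_hom I J \<phi>"
  shows "concat (map (\<lambda>j. replicate (fsize \<phi> j) j) [0..<J]) = \<phi>"
proof -
  let ?\<psi> = "concat (map (\<lambda>j. replicate (fsize \<phi> j) j) [0..<J])"
  have "mset ?\<psi> = mset \<phi>"
  proof (rule multiset_eqI)
    fix j
    have "j \<ge> J \<Longrightarrow> j \<notin> set \<phi>" using assms unfolding osk_hom_def by auto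
    then show "count (mset ?\<psi>) j = count (mset \<phi>) j"
      by (auto simp flip: fsize_eq_count simp: fsize_concat_replicate) (simp add: fsize_eq_count)
  qed
  moreover have "sorted \<phi>" using assms unfolding osk_hom_def by simp
  ultimately show ?thesis
    using properties_for_sort[of ?\<psi> \<phi>] sorted_concat_replicate by (metis sorted_sort_id)
qed

lemma osk_hom_terminal: "osk_hom I 1 (replicate I 0)"
  unfolding osk_hom_def by (auto simp: sorted_iff_nth_mono)

lemma osk_comp_terminal: "osk_hom I J \<phi> \<Longrightarrow> osk_comp \<phi> (replicate J 0) = replicate I 0"
  unfolding osk_hom_def osk_comp_def by (auto simp: map_replicate_const[symmetric] intro!: map_idI)

lemma sum_fsize: "osk_hom I J \<phi> \<Longrightarrow> sum_list (map (fsize \<phi>) [0..<J]) = I"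
  using arg_cong[OF concat_replicate_fsize, of I J \<phi> length]
  by (simp add: length_concat o_def osk_hom_def)

lemma osk_sum_points:
  assumes "osk_hom I J \<phi>"
  shows "osk_sum (replicate J 1) (map (\<lambda>j. replicate (fsize \<phi> j) 0) [0..<J]) = \<phi>"
proof -
  have "osk_sum (replicate J 1) (map (\<lambda>j. replicate (fsize \<phi> j) 0) [0..<J])
       = concat (map (\<lambda>j. replicate (fsize \<phi> j) j) [0..<J])"
    unfolding osk_sum_def by (auto simp: map_replicate_const sum_list_replicate intro!: arg_cong[where f=concat])
  with concat_replicate_fsize[OF assms] show ?thesis by simp
qed

lemma length_osk_collapse: "length (osk_collapse Ns) = sum_list Ns"
  unfolding osk_collapse_def by (simp add: length_concat comp_def sum_list_sum_nth atLeast0LessThan)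

lemma osk_hom_collapse: "osk_hom (sum_list Ns) (length Ns) (osk_collapse Ns)"
  unfolding osk_hom_def using length_osk_collapse[of Ns] sorted_concat_replicate[of "\<lambda>i. Ns ! i"]
  by (auto simp: osk_collapse_def)

lemma fib_osk_collapse:
  "j < length Ns \<Longrightarrow> fib (osk_collapse Ns) (replicate (sum_list Ns) x) j = replicate (Ns ! j) x"
  by (simp add: fib_replicate[OF length_osk_collapse])
     (simp add: osk_collapse_def fsize_concat_replicate)

lemma map_fib_osk_collapse:
  "map (\<lambda>j. f (fib (osk_collapse Ns) (replicate (sum_list Ns) x) j)) [0..<length Ns]
   = map (\<lambda>n. f (replicate n x)) Ns"
proof -
  have "map (\<lambda>j. f (fib (osk_collapse Ns) (replicate (sum_list Ns) x) j)) [0..<length Ns]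
        = map (\<lambda>j. f (replicate (Ns ! j) x)) [0..<length Ns]"
    by (rule map_cong) (simp_all add: fib_osk_collapse)
  also have "\<dots> = map (\<lambda>n. f (replicate n x)) (map (\<lambda>j. Ns ! j) [0..<length Ns])"
    by simp
  also have "\<dots> = map (\<lambda>n. f (replicate n x)) Ns"
    by (simp only: map_nth)
  finally show ?thesis .
qed

lemma osk_collapse_units: "osk_collapse (replicate I 1) = osk_id I"
proof -
  have singletons: "map (\<lambda>i. replicate (replicate I 1 ! i) i) [0..<I] = map (\<lambda>i. [i]) [0..<I]"
    by simp
  have "concat (map (\<lambda>i. [i]) [0..<I]) = [0..<I]" by (induction I) auto
  then show ?thesis unfolding osk_collapse_def osk_id_def length_replicate singletons .
qed

locale monoidal_category =
  fixes V :: "('o, 'm) mcat"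
  assumes monoidal: "monoidal_cat V"
begin

abbreviation dm where "dm \<equiv> mdom V"
abbreviation cd where "cd \<equiv> mcod V"
abbreviation cmp where "cmp \<equiv> mcmp V"
abbreviation idm where "idm \<equiv> midm V"
abbreviation tm where "tm \<equiv> tnsm V"
abbreviation to where "to \<equiv> tns V"

lemma category: "is_category V" and tensor: "tensor_functors V"
  using monoidal unfolding monoidal_cat_def lax_monoidal_cat_def by auto

lemma dm_idm[simp]: "dm (idm a) = a" and cd_idm[simp]: "cd (idm a) = a"
  using category unfolding is_category_def by auto
lemma dm_cmp[simp]: "cd f = dm g \<Longrightarrow> dm (cmp f g) = dm f"
  and cd_cmp[simp]: "cd f = dm g \<Longrightarrow> cd (cmp f g) = cd g"
  using category unfolding is_category_def by auto
lemma cmp_idm_left[simp]: "dm f = a \<Longrightarrow> cmp (idm a) f = f"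
  and cmp_idm_right[simp]: "cd f = a \<Longrightarrow> cmp f (idm a) = f"
  using category unfolding is_category_def by auto
lemma cmp_assoc: "cd f = dm g \<Longrightarrow> cd g = dm h \<Longrightarrow> cmp (cmp f g) h = cmp f (cmp g h)"
  using category unfolding is_category_def by blast

lemma cmp_cancel:
  assumes "cd f = dm g" "cmp f g = idm a" "cd g = dm h"
  shows "cmp f (cmp g h) = h"
proof -
  have "a = dm h" using assms cd_cmp[of f g] by (metis cd_idm)
  then show ?thesis using assms cmp_assoc[of f g h] by simp
qed

lemma dm_tm[simp]: "dm (tm fs) = to (map dm fs)" and cd_tm[simp]: "cd (tm fs) = to (map cd fs)"
  and to_single[simp]: "to [x] = x"
  using tensor unfolding tensor_functors_def by auto
lemma tm_idm: "tm (map (\<lambda>x. idm (h x)) xs) = idm (to (map h xs))"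
proof -
  have "tm (map idm (map h xs)) = idm (to (map h xs))"
    using tensor unfolding tensor_functors_def by blast
  then show ?thesis by (simp add: o_def)
qed

lemma tm_cmp:
  assumes "\<And>x. x \<in> set xs \<Longrightarrow> cd (f x) = dm (g x)"
  shows "tm (map (\<lambda>x. cmp (f x) (g x)) xs) = cmp (tm (map f xs)) (tm (map g xs))"
proof -
  have "tm (map2 cmp (map f xs) (map g xs)) = cmp (tm (map f xs)) (tm (map g xs))"
    using tensor assms unfolding tensor_functors_def by auto
  then show ?thesis by (simp add: map2_map_map)
qed

lemma mlam_typ:
  "osk_hom (length X) J \<phi> \<Longrightarrow> dm (mlam V J \<phi> X) = nested_tns V J \<phi> X \<and> cd (mlam V J \<phi> X) = to X"
  using monoidal unfolding monoidal_cat_def lax_monoidal_cat_def by blast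
lemma mlam_id: "mlam V (length X) (osk_id (length X)) X = idm (to X)"
  using monoidal unfolding monoidal_cat_def lax_monoidal_cat_def by blast

lemma mlam_replicate_typ:
  assumes "osk_hom I J \<phi>"
  shows "dm (mlam V J \<phi> (replicate I D)) = to (map (\<lambda>j. to (replicate (fsize \<phi> j) D)) [0..<J])"
    and "cd (mlam V J \<phi> (replicate I D)) = to (replicate I D)"
  using mlam_typ[of "replicate I D" J \<phi>] assms
  by (simp_all add: nested_tns_def fib_replicate osk_hom_def)

definition inverses :: "'m \<Rightarrow> 'm \<Rightarrow> bool" where
  "inverses f g \<longleftrightarrow> dm g = cd f \<and> cd g = dm f \<and> cmp f g = idm (dm f) \<and> cmp g f = idm (cd f)"

lemma invertible_iff_inverses: "invertible V f \<longleftrightarrow> (\<exists>g. inverses f g)"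
  unfolding invertible_def inverses_def by blast

lemma inverses_sym: "inverses f g \<Longrightarrow> inverses g f"
  unfolding inverses_def by auto

lemma inverses_cmp:
  assumes fg: "inverses f g" and fg': "inverses f' g'" and ff': "cd f = dm f'"
  shows "inverses (cmp f f') (cmp g' g)"
proof -
  have f: "dm g = cd f" "cd g = dm f" "cmp f g = idm (dm f)" "cmp g f = idm (cd f)"
    and f': "dm g' = cd f'" "cd g' = dm f'" "cmp f' g' = idm (dm f')" "cmp g' f' = idm (cd f')"
    using fg fg' unfolding inverses_def by auto
  show ?thesis using f f' ff' unfolding inverses_def by (simp add: cmp_assoc cmp_cancel)
qed

lemma inverses_tm:
  assumes "\<And>x. x \<in> set xs \<Longrightarrow> inverses (f x) (g x)"
  shows "inverses (tm (map f xs)) (tm (map g xs))"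
proof -
  have "cmp (tm (map f xs)) (tm (map g xs)) = tm (map (\<lambda>x. idm (dm (f x))) xs)"
    and "cmp (tm (map g xs)) (tm (map f xs)) = tm (map (\<lambda>x. idm (cd (f x))) xs)"
    and "map (\<lambda>x. dm (g x)) xs = map (\<lambda>x. cd (f x)) xs"
    and "map (\<lambda>x. cd (g x)) xs = map (\<lambda>x. dm (f x)) xs"
    using assms by (simp_all add: inverses_def flip: tm_cmp cong: map_cong)
  then show ?thesis unfolding inverses_def by (simp add: tm_idm o_def cong: map_cong)
qed

lemma inverses_swap:
  assumes b: "inverses b b'" and c: "inverses c c'" and square: "cmp a b = cmp c d"
    and "cd a = dm b" "cd c = dm d" "cd d = cd b" "dm a = dm c"
  shows "cmp d b' = cmp c' a"
proof -
  note typing = assms(4-7) b c[unfolded inverses_def] b[unfolded inverses_def]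
  have "cmp c' a = cmp c' (cmp (cmp a b) b')" using typing by (simp add: cmp_assoc)
  also have "\<dots> = cmp d b'" unfolding square using typing by (simp add: cmp_assoc cmp_cancel)
  finally show ?thesis by (rule sym)
qed

lemma inverses_cancel_left:
  assumes "inverses f g" "cmp f h = k" "cd f = dm h"
  shows "h = cmp g k"
  using assms unfolding inverses_def by (metis cmp_cancel)

lemma inverses_cancel_right:
  assumes "inverses f g" "cmp h f = k" "cd h = dm f"
  shows "h = cmp k g"
  using assms unfolding inverses_def by (metis cmp_assoc cmp_idm_right)

text \<open>Only the typing part of \<open>is_hcoalg\<close>; this is all that \<open>hmorph_inverse\<close>
  needs, so it applies to an associated homotopy coalgebra before that is known to be one.\<close>

definition hcoalg_typed :: "('o, 'm) hcoalg \<Rightarrow> bool" where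
  "hcoalg_typed C \<longleftrightarrow>
     (\<forall>m n \<phi>. osk_hom m n \<phi> \<longrightarrow> dm (hmor C n \<phi>) = hob C n \<and> cd (hmor C n \<phi>) = hob C m) \<and>
     (\<forall>Ns. dm (hchi C Ns) = to (map (hob C) Ns) \<and> cd (hchi C Ns) = hob C (sum_list Ns))"

lemma hmorph_inverse:
  assumes t: "is_hmorph V C G t" and ts: "\<And>k. inverses (t k) (s k)"
    and C: "hcoalg_typed C" and G: "hcoalg_typed G"
  shows "is_hmorph V G C s"
proof -
  have t_typ: "dm (t k) = hob C k" "cd (t k) = hob G k" for k
    using t unfolding is_hmorph_def by blast+
  have s_typ: "dm (s k) = hob G k \<and> cd (s k) = hob C k" for k
    using ts[of k] t_typ unfolding inverses_def by simp
  have C_hmor: "osk_hom m n \<phi> \<Longrightarrow> dm (hmor C n \<phi>) = hob C n \<and> cd (hmor C n \<phi>) = hob C m"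
    and G_hmor: "osk_hom m n \<phi> \<Longrightarrow> dm (hmor G n \<phi>) = hob G n \<and> cd (hmor G n \<phi>) = hob G m"
    and C_hchi: "dm (hchi C Ns) = to (map (hob C) Ns) \<and> cd (hchi C Ns) = hob C (sum_list Ns)"
    and G_hchi: "dm (hchi G Ns) = to (map (hob G) Ns) \<and> cd (hchi G Ns) = hob G (sum_list Ns)"
    for m n \<phi> Ns using C G unfolding hcoalg_typed_def by blast+
  have "cmp (hmor G n \<phi>) (s m) = cmp (s n) (hmor C n \<phi>)" if \<phi>: "osk_hom m n \<phi>" for m n \<phi>
  proof (rule inverses_swap[OF ts ts])
    show "cmp (hmor C n \<phi>) (t m) = cmp (t n) (hmor G n \<phi>)"
      using t \<phi> unfolding is_hmorph_def by blast
  qed (simp_all add: t_typ C_hmor[OF \<phi>] G_hmor[OF \<phi>])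
  moreover have "cmp (hchi G Ns) (s (sum_list Ns)) = cmp (tm (map s Ns)) (hchi C Ns)" for Ns
  proof (rule inverses_swap[OF ts inverses_tm[OF ts]])
    show "cmp (hchi C Ns) (t (sum_list Ns)) = cmp (tm (map t Ns)) (hchi G Ns)"
      using t unfolding is_hmorph_def by blast
  qed (simp_all add: t_typ C_hchi G_hchi o_def)
  ultimately show ?thesis unfolding is_hmorph_def using s_typ by blast
qed

end

lemma assoc_hcoalg_simps:
  "hob (assoc_hcoalg V D \<Delta>) = (\<lambda>k. tns V (replicate k D))"
  "hmor (assoc_hcoalg V D \<Delta>) n \<phi> =
     mcmp V (tnsm V (map (\<lambda>j. \<Delta> (fsize \<phi> j)) [0..<n])) (mlam V n \<phi> (replicate (length \<phi>) D))"
  "hchi (assoc_hcoalg V D \<Delta>) Ns = mlam V (length Ns) (osk_collapse Ns) (replicate (sum_list Ns) D)"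
  unfolding assoc_hcoalg_def by simp_all

locale homotopy_coalgebra = monoidal_category V for V :: "('o, 'm) mcat" +
  fixes C :: "('o, 'm) hcoalg"
  assumes hcoalg: "is_hcoalg V C"
begin

lemma dm_hmor: "osk_hom m n \<phi> \<Longrightarrow> dm (hmor C n \<phi>) = hob C n"
  and cd_hmor: "osk_hom m n \<phi> \<Longrightarrow> cd (hmor C n \<phi>) = hob C m"
  using hcoalg unfolding is_hcoalg_def by blast+
lemma hmor_id: "hmor C n (osk_id n) = idm (hob C n)"
  using hcoalg unfolding is_hcoalg_def by blast
lemma hmor_comp:
  "osk_hom l m \<phi> \<Longrightarrow> osk_hom m n \<psi> \<Longrightarrow> hmor C n (osk_comp \<phi> \<psi>) = cmp (hmor C n \<psi>) (hmor C m \<phi>)"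
  using hcoalg unfolding is_hcoalg_def by blast
lemma dm_hchi[simp]: "dm (hchi C Ns) = to (map (hob C) Ns)"
  and cd_hchi[simp]: "cd (hchi C Ns) = hob C (sum_list Ns)"
  using hcoalg unfolding is_hcoalg_def by blast+
lemma hchi_single: "hchi C [n] = idm (hob C n)"
  using hcoalg unfolding is_hcoalg_def by blast
lemma hchi_natural:
  "length fs = length Ns \<Longrightarrow> (\<forall>i<length Ns. osk_hom (length (fs ! i)) (Ns ! i) (fs ! i)) \<Longrightarrow>
   cmp (tm (map (\<lambda>i. hmor C (Ns ! i) (fs ! i)) [0..<length Ns])) (hchi C (map length fs))
   = cmp (hchi C Ns) (hmor C (sum_list Ns) (osk_sum Ns fs))"
  using hcoalg unfolding is_hcoalg_def by blast
lemma hchi_coherent: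
  "osk_hom (length Ns) J \<phi> \<Longrightarrow>
   cmp (tm (map (\<lambda>j. hchi C (fib \<phi> Ns j)) [0..<J])) (hchi C (map (\<lambda>j. sum_list (fib \<phi> Ns j)) [0..<J]))
   = cmp (mlam V J \<phi> (map (hob C) Ns)) (hchi C Ns)"
  using hcoalg unfolding is_hcoalg_def by blast

lemma hcoalg_typed: "hcoalg_typed C"
  unfolding hcoalg_typed_def using dm_hmor cd_hmor by simp

definition chi1 :: "nat \<Rightarrow> 'm" where
  "chi1 I = hchi C (replicate I 1)"

lemma dm_chi1[simp]: "dm (chi1 I) = to (replicate I (hob C 1))"
  and cd_chi1[simp]: "cd (chi1 I) = hob C I"
  unfolding chi1_def by (simp_all add: sum_list_replicate)

lemma chi1_coherent:
  assumes "osk_hom I J \<phi>"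
  shows "cmp (tm (map (\<lambda>j. chi1 (fsize \<phi> j)) [0..<J])) (hchi C (map (fsize \<phi>) [0..<J]))
       = cmp (mlam V J \<phi> (replicate I (hob C 1))) (chi1 I)"
  using hchi_coherent[of "replicate I 1" J \<phi>] assms
  by (simp add: chi1_def fib_replicate sum_list_replicate osk_hom_def)

lemma chi1_natural:
  assumes "osk_hom I J \<phi>"
  shows "cmp (tm (map (\<lambda>j. hmor C 1 (replicate (fsize \<phi> j) 0)) [0..<J])) (hchi C (map (fsize \<phi>) [0..<J]))
       = cmp (chi1 J) (hmor C J \<phi>)"
proof -
  let ?fs = "map (\<lambda>j. replicate (fsize \<phi> j) (0::nat)) [0..<J]"
  have points: "map (\<lambda>i. hmor C (replicate J 1 ! i) (?fs ! i)) [0..<length (replicate J (1::nat))]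
      = map (\<lambda>j. hmor C 1 (replicate (fsize \<phi> j) 0)) [0..<J]"
    by simp
  have "cmp (tm (map (\<lambda>j. hmor C 1 (replicate (fsize \<phi> j) 0)) [0..<J])) (hchi C (map length ?fs))
        = cmp (hchi C (replicate J 1)) (hmor C (sum_list (replicate J 1)) (osk_sum (replicate J 1) ?fs))"
    \<comment> \<open>simp rewrites \<open>1::nat\<close> to \<open>Suc 0\<close>; \<open>[simplified]\<close> brings the rule into the same form\<close>
    by (rule hchi_natural[of ?fs "replicate J 1", unfolded points]) (auto simp: osk_hom_terminal[simplified])
  then show ?thesis unfolding osk_sum_points[OF assms] by (simp add: chi1_def sum_list_replicate o_def)
qed

lemma chi1_collapse:
  "cmp (tm (map chi1 Ns)) (hchi C Ns)
   = cmp (mlam V (length Ns) (osk_collapse Ns) (replicate (sum_list Ns) (hob C 1))) (chi1 (sum_list Ns))"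
proof -
  have "map (\<lambda>j. hchi C (fib (osk_collapse Ns) (replicate (sum_list Ns) 1) j)) [0..<length Ns] = map chi1 Ns"
    and "map (\<lambda>j. sum_list (fib (osk_collapse Ns) (replicate (sum_list Ns) (1::nat)) j)) [0..<length Ns] = Ns"
    unfolding map_fib_osk_collapse by (simp_all add: chi1_def[abs_def] sum_list_replicate)
  then show ?thesis
    using hchi_coherent[of "replicate (sum_list Ns) 1" "length Ns" "osk_collapse Ns"] osk_hom_collapse[of Ns]
    by (simp add: chi1_def)
qed

lemma chi1_invertible_if_iso:
  assumes "hcoalg_iso V C (assoc_hcoalg V D \<Delta>)"
  shows "invertible V (chi1 I)"
proof -
  let ?G = "assoc_hcoalg V D \<Delta>"
  obtain t s where t: "is_hmorph V C ?G t" and s: "is_hmorph V ?G C s"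
    and ts: "\<And>k. cmp (t k) (s k) = idm (hob C k) \<and> cmp (s k) (t k) = idm (hob ?G k)"
    using assms unfolding hcoalg_iso_def by blast
  have dm_t: "dm (t k) = hob C k" and cd_t: "cd (t k) = to (replicate k D)"
    and dm_s: "dm (s k) = to (replicate k D)" and cd_s: "cd (s k) = hob C k" for k
    using t s unfolding is_hmorph_def assoc_hcoalg_simps by blast+
  have ts_inverses: "inverses (t k) (s k)" for k
    using ts[of k] unfolding inverses_def by (simp add: dm_t cd_t dm_s cd_s assoc_hcoalg_simps)
  have "hchi ?G (replicate I 1) = idm (to (replicate I D))"
    using mlam_id[of "replicate I D"]
    unfolding assoc_hcoalg_simps osk_collapse_units by (simp add: sum_list_replicate)
  moreover have "cmp (hchi C (replicate I 1)) (t (sum_list (replicate I 1)))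
      = cmp (tm (map t (replicate I 1))) (hchi ?G (replicate I 1))"
    using t unfolding is_hmorph_def by blast
  ultimately have "cmp (chi1 I) (t I) = tm (map t (replicate I 1))"
    using cd_t unfolding chi1_def by (simp add: sum_list_replicate)
  then have "chi1 I = cmp (tm (map t (replicate I 1))) (s I)"
    by (rule inverses_cancel_right[OF ts_inverses]) (simp add: dm_t)
  moreover have "inverses (cmp (tm (map t (replicate I 1))) (s I)) (cmp (t I) (tm (map s (replicate I 1))))"
    by (rule inverses_cmp[OF inverses_tm[OF ts_inverses] inverses_sym[OF ts_inverses]])
      (simp add: cd_t dm_s o_def)
  ultimately show ?thesis unfolding invertible_iff_inverses by auto
qed

end

locale hcoalgebra_invertible_chi1 = homotopy_coalgebra V C for V :: "('o, 'm) mcat" and C +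
  assumes chi1_invertible: "invertible V (chi1 I)"
begin

definition chi1_inv :: "nat \<Rightarrow> 'm" where
  "chi1_inv I = (SOME g. inverses (chi1 I) g)"

lemma inverses_chi1: "inverses (chi1 I) (chi1_inv I)"
  using chi1_invertible[of I] unfolding chi1_inv_def invertible_iff_inverses by (rule someI_ex)

lemma dm_chi1_inv[simp]: "dm (chi1_inv I) = hob C I"
  and cd_chi1_inv[simp]: "cd (chi1_inv I) = to (replicate I (hob C 1))"
  and chi1_chi1_inv[simp]: "cmp (chi1 I) (chi1_inv I) = idm (to (replicate I (hob C 1)))"
  and chi1_inv_chi1[simp]: "cmp (chi1_inv I) (chi1 I) = idm (hob C I)"
  using inverses_chi1[of I] unfolding inverses_def by auto

lemma chi1_inv_1: "chi1_inv 1 = idm (hob C 1)"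
proof -
  have "chi1 1 = idm (hob C 1)" unfolding chi1_def by (simp add: hchi_single)
  then have "chi1_inv 1 = cmp (chi1_inv 1) (chi1 1)" by simp
  then show ?thesis by simp
qed

definition comult :: "nat \<Rightarrow> 'm" where
  "comult n = cmp (hmor C 1 (replicate n 0)) (chi1_inv n)"

lemma dm_hmor_terminal: "dm (hmor C 1 (replicate n 0)) = hob C 1"
  and cd_hmor_terminal: "cd (hmor C 1 (replicate n 0)) = hob C n"
  using dm_hmor cd_hmor osk_hom_terminal by blast+

lemma dm_comult[simp]: "dm (comult n) = hob C 1"
  and cd_comult[simp]: "cd (comult n) = to (replicate n (hob C 1))"
  unfolding comult_def using dm_hmor_terminal cd_hmor_terminal by simp_all

lemma hmor_chi1_inv:
  assumes \<phi>: "osk_hom I J \<phi>"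
  shows "cmp (hmor C J \<phi>) (chi1_inv I)
       = cmp (chi1_inv J) (cmp (tm (map (\<lambda>j. comult (fsize \<phi> j)) [0..<J]))
                                (mlam V J \<phi> (replicate I (hob C 1))))"
proof -
  define T where "T = tm (map (\<lambda>j. hmor C 1 (replicate (fsize \<phi> j) 0)) [0..<J])"
  define U where "U = tm (map (\<lambda>j. chi1_inv (fsize \<phi> j)) [0..<J])"
  define H where "H = hchi C (map (fsize \<phi>) [0..<J])"
  define L where "L = mlam V J \<phi> (replicate I (hob C 1))"
  have UW: "inverses (tm (map (\<lambda>j. chi1 (fsize \<phi> j)) [0..<J])) U"
    unfolding U_def by (rule inverses_tm) (rule inverses_chi1)
  have typing: "dm T = cd (chi1_inv J)" "cd T = dm H" "cd U = dm L" "cd L = dm (chi1 I)" "cd H = hob C I"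
    "dm (hmor C J \<phi>) = hob C J" "cd (hmor C J \<phi>) = hob C I"
    using dm_hmor[OF \<phi>] cd_hmor[OF \<phi>] mlam_replicate_typ[OF \<phi>] sum_fsize[OF \<phi>]
    unfolding T_def U_def H_def L_def
    by (simp_all add: o_def dm_hmor_terminal[simplified] cd_hmor_terminal[simplified] map_replicate_const)
  have "H = cmp U (cmp L (chi1 I))"
    using chi1_coherent[OF \<phi>] by (intro inverses_cancel_left[OF UW]) (simp_all add: H_def L_def o_def)
  moreover have "hmor C J \<phi> = cmp (chi1_inv J) (cmp T H)"
    using chi1_natural[OF \<phi>] typing
    by (intro inverses_cancel_left[OF inverses_chi1]) (simp_all add: T_def H_def)
  ultimately have "cmp (hmor C J \<phi>) (chi1_inv I) = cmp (chi1_inv J) (cmp (cmp T U) L)"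
    using typing by (simp add: cmp_assoc cmp_cancel)
  moreover have "cmp T U = tm (map (\<lambda>j. comult (fsize \<phi> j)) [0..<J])"
    unfolding T_def U_def comult_def by (rule tm_cmp[symmetric]) (simp add: cd_hmor_terminal[simplified])
  ultimately show ?thesis unfolding L_def by simp
qed

definition assoc_C :: "('o, 'm) hcoalg" where
  "assoc_C = assoc_hcoalg V (hob C 1) comult"

lemma hob_assoc_C: "hob assoc_C = (\<lambda>k. to (replicate k (hob C 1)))"
  and hmor_assoc_C: "hmor assoc_C n \<phi> = cmp (tm (map (\<lambda>j. comult (fsize \<phi> j)) [0..<n]))
                                  (mlam V n \<phi> (replicate (length \<phi>) (hob C 1)))"
  and hchi_assoc_C: "hchi assoc_C Ns = mlam V (length Ns) (osk_collapse Ns) (replicate (sum_list Ns) (hob C 1))"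
  unfolding assoc_C_def assoc_hcoalg_simps by simp_all

lemma dm_hmor_assoc_C: "osk_hom m n \<phi> \<Longrightarrow> dm (hmor assoc_C n \<phi>) = hob assoc_C n"
  and cd_hmor_assoc_C: "osk_hom m n \<phi> \<Longrightarrow> cd (hmor assoc_C n \<phi>) = hob assoc_C m"
  using mlam_replicate_typ[of m n \<phi>]
  by (simp_all add: hob_assoc_C hmor_assoc_C o_def map_replicate_const osk_hom_def)

lemma dm_hchi_assoc_C: "dm (hchi assoc_C Ns) = to (map (hob assoc_C) Ns)"
  and cd_hchi_assoc_C: "cd (hchi assoc_C Ns) = hob assoc_C (sum_list Ns)"
proof -
  let ?X = "replicate (sum_list Ns) (hob C 1)"
  have "osk_hom (length ?X) (length Ns) (osk_collapse Ns)"
    using osk_hom_collapse[of Ns] by simp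
  then have "dm (hchi assoc_C Ns) = nested_tns V (length Ns) (osk_collapse Ns) ?X"
    and "cd (hchi assoc_C Ns) = to ?X"
    using mlam_typ unfolding hchi_assoc_C by blast+
  moreover have "nested_tns V (length Ns) (osk_collapse Ns) ?X = to (map (hob assoc_C) Ns)"
    unfolding nested_tns_def map_fib_osk_collapse by (simp add: hob_assoc_C)
  ultimately show "dm (hchi assoc_C Ns) = to (map (hob assoc_C) Ns)"
    and "cd (hchi assoc_C Ns) = hob assoc_C (sum_list Ns)"
    by (simp_all add: hob_assoc_C)
qed

lemma hcoalg_typed_assoc_C: "hcoalg_typed assoc_C"
  unfolding hcoalg_typed_def using dm_hmor_assoc_C cd_hmor_assoc_C dm_hchi_assoc_C cd_hchi_assoc_C by blast

lemma comult_1: "comult 1 = idm (hob C 1)"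
proof -
  have "replicate 1 (0::nat) = osk_id 1" by (simp add: osk_id_def)
  then show ?thesis unfolding comult_def chi1_inv_1 by (simp add: hmor_id)
qed

lemma is_coalg_comult: "is_coalg V (hob C 1) comult"
  unfolding is_coalg_def
proof (intro conjI allI impI)
  fix I J \<phi> assume \<phi>: "osk_hom I J \<phi>"
  have "length \<phi> = I" using \<phi> by (simp add: osk_hom_def)
  then have hmor_\<phi>: "hmor assoc_C J \<phi> = cmp (tm (map (\<lambda>j. comult (fsize \<phi> j)) [0..<J]))
                                        (mlam V J \<phi> (replicate I (hob C 1)))"
    by (simp add: hmor_assoc_C)
  have "hmor C 1 (replicate I 0) = cmp (hmor C 1 (replicate J 0)) (hmor C J \<phi>)"
    using hmor_comp[OF \<phi> osk_hom_terminal] osk_comp_terminal[OF \<phi>] by simp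
  then have "comult I = cmp (hmor C 1 (replicate J 0)) (cmp (hmor C J \<phi>) (chi1_inv I))"
    unfolding comult_def using cd_hmor_terminal dm_hmor[OF \<phi>] cd_hmor[OF \<phi>] by (simp add: cmp_assoc)
  also have "\<dots> = cmp (hmor C 1 (replicate J 0)) (cmp (chi1_inv J) (hmor assoc_C J \<phi>))"
    unfolding hmor_chi1_inv[OF \<phi>] hmor_\<phi> ..
  also have "\<dots> = cmp (comult J) (hmor assoc_C J \<phi>)"
    unfolding comult_def[of J] using cd_hmor_terminal dm_hmor_assoc_C[OF \<phi>]
    by (simp add: cmp_assoc hob_assoc_C)
  finally show "comult I = cmp (comult J) (cmp (tm (map (\<lambda>j. comult (fsize \<phi> j)) [0..<J]))
                                        (mlam V J \<phi> (replicate I (hob C 1))))"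
    unfolding hmor_\<phi> .
qed (use comult_1 in simp_all)

lemma hmorph_chi1_inv: "is_hmorph V C assoc_C chi1_inv"
  unfolding is_hmorph_def
proof (intro conjI allI impI)
  fix m n \<phi> assume \<phi>: "osk_hom m n \<phi>"
  then have "length \<phi> = m" by (simp add: osk_hom_def)
  with hmor_chi1_inv[OF \<phi>] show "cmp (hmor C n \<phi>) (chi1_inv m) = cmp (chi1_inv n) (hmor assoc_C n \<phi>)"
    by (simp add: hmor_assoc_C)
next
  fix Ns
  show "cmp (hchi C Ns) (chi1_inv (sum_list Ns)) = cmp (tm (map chi1_inv Ns)) (hchi assoc_C Ns)"
  proof (rule inverses_swap[OF inverses_chi1 inverses_tm[OF inverses_chi1]])
    show "cmp (hchi assoc_C Ns) (chi1 (sum_list Ns)) = cmp (tm (map chi1 Ns)) (hchi C Ns)"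
      using chi1_collapse by (simp add: hchi_assoc_C)
  qed (simp_all add: dm_hchi_assoc_C cd_hchi_assoc_C hob_assoc_C o_def)
qed (simp_all add: hob_assoc_C)

lemma hcoalg_iso_assoc_C: "hcoalg_iso V C assoc_C"
  unfolding hcoalg_iso_def
proof (intro exI conjI allI)
  show "is_hmorph V C assoc_C chi1_inv" by (rule hmorph_chi1_inv)
  have "\<And>k. inverses (chi1_inv k) (chi1 k)" by (rule inverses_sym[OF inverses_chi1])
  then show "is_hmorph V assoc_C C chi1"
    by (rule hmorph_inverse[OF hmorph_chi1_inv _ hcoalg_typed hcoalg_typed_assoc_C])
qed (simp_all add: hob_assoc_C)

end

theorem mainTheorem3:
  fixes V :: "('o, 'm) mcat" and C :: "('o, 'm) hcoalg"
  assumes "monoidal_cat V" and "is_hcoalg V C"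
  shows "(\<exists>D \<Delta>. is_coalg V D \<Delta> \<and> hcoalg_iso V C (assoc_hcoalg V D \<Delta>))
         \<longleftrightarrow> (\<forall>I. invertible V (hchi C (replicate I 1)))"
proof -
  interpret homotopy_coalgebra V C
    using assms by unfold_locales
  show ?thesis
  proof
    assume "\<exists>D \<Delta>. is_coalg V D \<Delta> \<and> hcoalg_iso V C (assoc_hcoalg V D \<Delta>)"
    then show "\<forall>I. invertible V (hchi C (replicate I 1))"
      using chi1_invertible_if_iso unfolding chi1_def by blast
  next
    assume "\<forall>I. invertible V (hchi C (replicate I 1))"
    then interpret hcoalgebra_invertible_chi1 V C
      by unfold_locales (simp add: chi1_def)
    show "\<exists>D \<Delta>. is_coalg V D \<Delta> \<and> hcoalg_iso V C (assoc_hcoalg V D \<Delta>)"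
      using is_coalg_comult hcoalg_iso_assoc_C unfolding assoc_C_def by blast
  qed
qed

end
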